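(* Let $S$ be an AG-groupoid with a left identity. Every bi-ideal of $S$ is prime if and only if every bi-ideal of $S$ is idempotent and the set of bi-ideals of $S$ is totally ordered under inclusion (for any bi-ideals $I,J$, either $I\subseteq J$ or $J\subseteq I$).
   Context: An AG-groupoid is a set $S$ with a binary operation satisfying $(ab)c=(cb)a$ for all $a,b,c\in S$. A left identity is an element $e$ with $ea=a$ for all $a\in S$. For nonempty subsets, $AB=\{ab:a\in A,b\in B\}$, $B^{2}=BB$. A bi-ideal of $S$ is a nonempty subset $B$ with $BB\subseteq B$ and $(BS)B\subseteq B$; it is idempotent if $B^{2}=B$. A bi-ideal $B$ is prime if for all bi-ideals $B_{1},B_{2}$ of $S$, $B_{1}B_{2}\subseteq B$ implies $B_{1}\subseteq B$ or $B_{2}\subseteq B$. *)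

theory Defs
  imports Main
begin

text \<open>An AG-groupoid: the carrier is the whole type 'a, with binary operation m.\<close>

definition AG_groupoid :: "('a \<Rightarrow> 'a \<Rightarrow> 'a) \<Rightarrow> bool" where
  "AG_groupoid m \<longleftrightarrow> (\<forall>a b c. m (m a b) c = m (m c b) a)"

definition left_identity :: "('a \<Rightarrow> 'a \<Rightarrow> 'a) \<Rightarrow> 'a \<Rightarrow> bool" where
  "left_identity m e \<longleftrightarrow> (\<forall>a. m e a = a)"

definition setmul :: "('a \<Rightarrow> 'a \<Rightarrow> 'a) \<Rightarrow> 'a set \<Rightarrow> 'a set \<Rightarrow> 'a set" where
  "setmul m A B = {m a b | a b. a \<in> A \<and> b \<in> B}"

definition bi_ideal :: "('a \<Rightarrow> 'a \<Rightarrow> 'a) \<Rightarrow> 'a set \<Rightarrow> bool" where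
  "bi_ideal m B \<longleftrightarrow> B \<noteq> {} \<and> setmul m B B \<subseteq> B \<and> setmul m (setmul m B UNIV) B \<subseteq> B"

definition idempotent_set :: "('a \<Rightarrow> 'a \<Rightarrow> 'a) \<Rightarrow> 'a set \<Rightarrow> bool" where
  "idempotent_set m B \<longleftrightarrow> setmul m B B = B"

definition prime_bi_ideal :: "('a \<Rightarrow> 'a \<Rightarrow> 'a) \<Rightarrow> 'a set \<Rightarrow> bool" where
  "prime_bi_ideal m B \<longleftrightarrow> bi_ideal m B \<and>
     (\<forall>B1 B2. bi_ideal m B1 \<longrightarrow> bi_ideal m B2 \<longrightarrow> setmul m B1 B2 \<subseteq> B \<longrightarrow> B1 \<subseteq> B \<or> B2 \<subseteq> B)"

end

theory Submission
  imports Defs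
begin

text \<open>
  In an AG-groupoid the medial law (ab)(cd) = (ac)(bd) holds, and with a
  left identity also a(bc) = b(ac) and the paramedial law (ab)(cd) = (dc)(ba).  From
  these, the product IJ of two bi-ideals is again a bi-ideal, and two absorption facts
  hold: I \<subseteq> IJ forces I \<subseteq> J, and J \<subseteq> IJ forces JI \<subseteq> I.

  If every bi-ideal is prime, apply primeness of BB to BB \<subseteq> BB to get B \<subseteq> BB,
  i.e. idempotence; apply primeness of IJ and of JI to obtain, by absorption, I \<subseteq> J,
  J \<subseteq> I, or (I = JI and J = IJ), in which last case paramediality gives
  I = II = (JI)(JI) = (IJ)(IJ) = JJ = J.  Conversely, if bi-ideals are idempotent and
  totally ordered, B1B2 \<subseteq> B with, say, B1 \<subseteq> B2 gives B1 = B1B1 \<subseteq> B1B2 \<subseteq> B;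
  this direction holds in any groupoid.
\<close>

lemma setmulI [intro]: "a \<in> A \<Longrightarrow> b \<in> B \<Longrightarrow> m a b \<in> setmul m A B"
  unfolding setmul_def by blast

lemma setmulE [elim]:
  assumes "x \<in> setmul m A B"
  obtains a b where "a \<in> A" "b \<in> B" "x = m a b"
  using assms unfolding setmul_def by blast

lemma setmul_mono: "A \<subseteq> A' \<Longrightarrow> B \<subseteq> B' \<Longrightarrow> setmul m A B \<subseteq> setmul m A' B'"
  unfolding setmul_def by blast

lemma bi_ideal_mult: "bi_ideal m B \<Longrightarrow> a \<in> B \<Longrightarrow> b \<in> B \<Longrightarrow> m a b \<in> B"
  unfolding bi_ideal_def by blast

lemma bi_ideal_sandwich: "bi_ideal m B \<Longrightarrow> a \<in> B \<Longrightarrow> b \<in> B \<Longrightarrow> m (m a s) b \<in> B"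
  unfolding bi_ideal_def by blast

lemma setmul_absorb:
  assumes I: "bi_ideal m I" and J_sub: "J \<subseteq> setmul m I J"
  shows "setmul m J I \<subseteq> I"
proof
  fix x assume "x \<in> setmul m J I"
  then obtain p q where "p \<in> J" "q \<in> I" "x = m p q" by blast
  moreover from \<open>p \<in> J\<close> J_sub obtain a b where "a \<in> I" "p = m a b" by blast
  ultimately show "x \<in> I" using bi_ideal_sandwich[OF I] by blast
qed

lemma prime_if_idempotent_total:
  assumes idem: "\<And>B. bi_ideal m B \<Longrightarrow> setmul m B B = B"
    and total: "\<And>I J. bi_ideal m I \<Longrightarrow> bi_ideal m J \<Longrightarrow> I \<subseteq> J \<or> J \<subseteq> I"
    and B: "bi_ideal m B"
  shows "prime_bi_ideal m B"
  unfolding prime_bi_ideal_def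
proof (intro conjI allI impI B)
  fix B1 B2 assume B1: "bi_ideal m B1" and B2: "bi_ideal m B2" and prod: "setmul m B1 B2 \<subseteq> B"
  from total[OF B1 B2] show "B1 \<subseteq> B \<or> B2 \<subseteq> B"
  proof
    assume "B1 \<subseteq> B2"
    then have "setmul m B1 B1 \<subseteq> setmul m B1 B2" by (rule setmul_mono[OF order_refl])
    then show ?thesis using idem[OF B1] prod by blast
  next
    assume "B2 \<subseteq> B1"
    then have "setmul m B2 B2 \<subseteq> setmul m B1 B2" by (rule setmul_mono[OF _ order_refl])
    then show ?thesis using idem[OF B2] prod by blast
  qed
qed

locale AG_left_identity =
  fixes m :: "'a \<Rightarrow> 'a \<Rightarrow> 'a" (infixl "\<cdot>" 70) and e :: 'a
  assumes AG: "AG_groupoid m" and lid: "left_identity m e"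
begin

lemma left_invertive: "(a \<cdot> b) \<cdot> c = (c \<cdot> b) \<cdot> a"
  using AG unfolding AG_groupoid_def by blast

lemma left_ident [simp]: "e \<cdot> a = a"
  using lid unfolding left_identity_def by blast

lemma medial: "(a \<cdot> b) \<cdot> (c \<cdot> d) = (a \<cdot> c) \<cdot> (b \<cdot> d)"
proof -
  have "(a \<cdot> b) \<cdot> (c \<cdot> d) = ((c \<cdot> d) \<cdot> b) \<cdot> a" by (rule left_invertive)
  also have "\<dots> = ((b \<cdot> d) \<cdot> c) \<cdot> a" by (simp only: left_invertive[of c d b])
  also have "\<dots> = (a \<cdot> c) \<cdot> (b \<cdot> d)" by (rule left_invertive)
  finally show ?thesis .
qed

lemma left_permute: "a \<cdot> (b \<cdot> c) = b \<cdot> (a \<cdot> c)"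
proof -
  have "a \<cdot> (b \<cdot> c) = (e \<cdot> a) \<cdot> (b \<cdot> c)" by simp
  also have "\<dots> = (e \<cdot> b) \<cdot> (a \<cdot> c)" by (rule medial)
  finally show ?thesis by simp
qed

lemma paramedial: "(a \<cdot> b) \<cdot> (c \<cdot> d) = (d \<cdot> c) \<cdot> (b \<cdot> a)"
proof -
  have "(a \<cdot> b) \<cdot> (c \<cdot> d) = c \<cdot> ((a \<cdot> b) \<cdot> d)" by (rule left_permute)
  also have "\<dots> = c \<cdot> ((d \<cdot> b) \<cdot> a)" by (simp only: left_invertive[of a b d])
  also have "\<dots> = (d \<cdot> b) \<cdot> (c \<cdot> a)" by (rule left_permute)
  also have "\<dots> = (d \<cdot> c) \<cdot> (b \<cdot> a)" by (rule medial)
  finally show ?thesis .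
qed

lemma setmul_paramedial:
  "setmul m (setmul m A B) (setmul m C D) = setmul m (setmul m D C) (setmul m B A)"
proof -
  have "setmul m (setmul m A B) (setmul m C D) \<subseteq> setmul m (setmul m D C) (setmul m B A)"
    for A B C D
  proof
    fix x assume "x \<in> setmul m (setmul m A B) (setmul m C D)"
    then obtain a b c d where "a \<in> A" "b \<in> B" "c \<in> C" "d \<in> D"
      and "x = (a \<cdot> b) \<cdot> (c \<cdot> d)" by blast
    then have "x = (d \<cdot> c) \<cdot> (b \<cdot> a)" "d \<cdot> c \<in> setmul m D C" "b \<cdot> a \<in> setmul m B A"
      using paramedial by blast+
    then show "x \<in> setmul m (setmul m D C) (setmul m B A)" by blast
  qed
  then show ?thesis by blast
qed

lemma bi_ideal_setmul:
  assumes I: "bi_ideal m I" and J: "bi_ideal m J"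
  shows "bi_ideal m (setmul m I J)"
  unfolding bi_ideal_def
proof (intro conjI subsetI)
  obtain i j where "i \<in> I" "j \<in> J" using I J unfolding bi_ideal_def by blast
  then show "setmul m I J \<noteq> {}" by blast
next
  fix x assume "x \<in> setmul m (setmul m I J) (setmul m I J)"
  then obtain a b c d where "a \<in> I" "b \<in> J" "c \<in> I" "d \<in> J" "x = (a \<cdot> b) \<cdot> (c \<cdot> d)" by blast
  moreover have "(a \<cdot> b) \<cdot> (c \<cdot> d) = (a \<cdot> c) \<cdot> (b \<cdot> d)" by (rule medial)
  ultimately show "x \<in> setmul m I J" using bi_ideal_mult[OF I] bi_ideal_mult[OF J] by auto
next
  fix x assume "x \<in> setmul m (setmul m (setmul m I J) UNIV) (setmul m I J)"
  then obtain a b c d s where abcd: "a \<in> I" "b \<in> J" "c \<in> I" "d \<in> J"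
    and x: "x = ((a \<cdot> b) \<cdot> s) \<cdot> (c \<cdot> d)" by blast
  have "((a \<cdot> b) \<cdot> s) \<cdot> (c \<cdot> d) = ((a \<cdot> b) \<cdot> (e \<cdot> s)) \<cdot> (c \<cdot> d)" by simp
  also have "\<dots> = ((a \<cdot> e) \<cdot> (b \<cdot> s)) \<cdot> (c \<cdot> d)" by (simp only: medial[of a b e s])
  also have "\<dots> = ((a \<cdot> e) \<cdot> c) \<cdot> ((b \<cdot> s) \<cdot> d)" by (rule medial)
  finally show "x \<in> setmul m I J"
    using x abcd bi_ideal_sandwich[OF I] bi_ideal_sandwich[OF J] by auto
qed

lemma subset_if_subset_setmul:
  assumes J: "bi_ideal m J" and I_sub: "I \<subseteq> setmul m I J"
  shows "I \<subseteq> J"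
proof
  fix x assume "x \<in> I"
  with I_sub obtain a b where "a \<in> I" "b \<in> J" and x: "x = a \<cdot> b" by blast
  from \<open>a \<in> I\<close> I_sub obtain a' b' where "a' \<in> I" "b' \<in> J" and a: "a = a' \<cdot> b'" by blast
  from \<open>a' \<in> I\<close> I_sub obtain c d where "d \<in> J" and a': "a' = c \<cdot> d" by blast
  have "x = (a' \<cdot> b') \<cdot> b" using x a by simp
  also have "\<dots> = (b \<cdot> b') \<cdot> a'" by (rule left_invertive)
  also have "\<dots> = (b \<cdot> b') \<cdot> (c \<cdot> d)" by (simp only: a')
  also have "\<dots> = (d \<cdot> c) \<cdot> (b' \<cdot> b)" by (rule paramedial)
  finally show "x \<in> J"
    using bi_ideal_sandwich[OF J \<open>d \<in> J\<close> bi_ideal_mult[OF J \<open>b' \<in> J\<close> \<open>b \<in> J\<close>]] by simp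
qed

text \<open>Primeness of every bi-ideal forces idempotence: apply it to BB \<subseteq> BB.\<close>
lemma idempotent_if_all_prime:
  assumes prime: "\<And>B. bi_ideal m B \<Longrightarrow> prime_bi_ideal m B" and B: "bi_ideal m B"
  shows "setmul m B B = B"
proof
  have "prime_bi_ideal m (setmul m B B)" by (rule prime[OF bi_ideal_setmul[OF B B]])
  then show "B \<subseteq> setmul m B B" using B unfolding prime_bi_ideal_def by blast
  show "setmul m B B \<subseteq> B" using B unfolding bi_ideal_def by blast
qed

lemma total_if_all_prime:
  assumes prime: "\<And>B. bi_ideal m B \<Longrightarrow> prime_bi_ideal m B"
    and I: "bi_ideal m I" and J: "bi_ideal m J"
  shows "I \<subseteq> J \<or> J \<subseteq> I"
proof -
  have covers: "X \<subseteq> setmul m X Y \<or> Y \<subseteq> setmul m X Y"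
    if X: "bi_ideal m X" and Y: "bi_ideal m Y" for X Y
    using prime[OF bi_ideal_setmul[OF X Y]] X Y unfolding prime_bi_ideal_def by blast
  consider "I \<subseteq> setmul m I J" | "J \<subseteq> setmul m J I"
    | "J \<subseteq> setmul m I J" "I \<subseteq> setmul m J I"
    using covers[OF I J] covers[OF J I] by blast
  then show ?thesis
  proof cases
    case 1
    then show ?thesis using subset_if_subset_setmul[OF J] by blast
  next
    case 2
    then show ?thesis using subset_if_subset_setmul[OF I] by blast
  next
    case 3
    then have JI: "setmul m J I = I" and IJ: "setmul m I J = J"
      using setmul_absorb[OF I] setmul_absorb[OF J] by blast+
    have "I = setmul m I I" using idempotent_if_all_prime[OF prime I] by simp
    also have "\<dots> = setmul m (setmul m J I) (setmul m J I)" by (simp only: JI)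
    also have "\<dots> = setmul m (setmul m I J) (setmul m I J)" by (rule setmul_paramedial)
    also have "\<dots> = J" by (simp only: IJ idempotent_if_all_prime[OF prime J])
    finally show ?thesis by simp
  qed
qed

end

theorem theorem1:
  fixes m :: "'a \<Rightarrow> 'a \<Rightarrow> 'a" and e :: 'a
  assumes "AG_groupoid m" and "left_identity m e"
  shows "(\<forall>B. bi_ideal m B \<longrightarrow> prime_bi_ideal m B) \<longleftrightarrow>
         ((\<forall>B. bi_ideal m B \<longrightarrow> idempotent_set m B) \<and>
          (\<forall>I J. bi_ideal m I \<longrightarrow> bi_ideal m J \<longrightarrow> I \<subseteq> J \<or> J \<subseteq> I))"
proof -
  interpret AG_left_identity m e using assms by unfold_locales
  show ?thesis
    unfolding idempotent_set_def
  proof (intro iffI conjI allI impI)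
    assume "\<forall>B. bi_ideal m B \<longrightarrow> prime_bi_ideal m B"
    then have prime: "\<And>B. bi_ideal m B \<Longrightarrow> prime_bi_ideal m B" by blast
    show "setmul m B B = B" if "bi_ideal m B" for B
      using idempotent_if_all_prime[OF prime that] .
    show "I \<subseteq> J \<or> J \<subseteq> I" if "bi_ideal m I" "bi_ideal m J" for I J
      using total_if_all_prime[OF prime that] .
  next
    fix B
    assume "(\<forall>B. bi_ideal m B \<longrightarrow> setmul m B B = B) \<and>
      (\<forall>I J. bi_ideal m I \<longrightarrow> bi_ideal m J \<longrightarrow> I \<subseteq> J \<or> J \<subseteq> I)" and "bi_ideal m B"
    then show "prime_bi_ideal m B" using prime_if_idempotent_total[of m B] by blast
  qed
qed

end
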